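(* Fix $r^+\ge 8$. There is a constant $c_0=c_0(r^+)>1$ (depending only on $r^+$, not on $d$ or the bodies) such that for every convex body $K$ in $\mathbb{R}^d$, every $x\in\operatorname{int}(K)$, and every $y\in B_K(x,r^+)$, $$\tfrac{1}{c_0}A(x)\subseteq \mathcal{B}_K(y)\subseteq c_0A(x).$$
   Context: $K$ is a convex body (compact convex, nonempty interior). For $x\in\operatorname{int}(K)$, $A(x):=(K-x)\cap(x-K)$ (the Macbeath region $K\cap(2x-K)$ translated to the origin). $B_K(x,r)$ is the closed ball of radius $r$ about $x$ in the Hilbert metric $d_K(x,y)=\frac12\ln\left(\frac{\|y-x'\|}{\|x-x'\|}\frac{\|x-y'\|}{\|y-y'\|}\right)$, where $y'$ (resp. $x'$) is where the ray from $x$ through $y$ (resp. from $y$ through $x$) meets $\partial K$. For a convex body $E$ with $O\in\operatorname{int}E$, $\|v\|_E=\inf\{\lambda>0: v\in\lambda E\}$. The Hilbert Finsler ball at $y\in\operatorname{int}(K)$ is $\mathcal{B}_K(y)=\{v\in\mathbb{R}^d: \frac12(\|v\|_{K-y}+\|-v\|_{K-y})\le 1\}$. *)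

theory Defs
  imports "HOL-Analysis.Analysis"
begin

text \<open>Euclidean d-space is modelled uniformly in d as the coordinate subspace of
  functions vanishing at all indices i >= d.  This lets the statement quantify
  over the dimension d inside the existential for the constant.\<close>

type_synonym vec = "nat \<Rightarrow>\<^sub>C real"

definition Rd :: "nat \<Rightarrow> vec set" where
  "Rd d = {f. \<forall>i\<ge>d. apply_bcontfun f i = 0}"

definition rel_int_in :: "vec set \<Rightarrow> vec set \<Rightarrow> vec set" where
  "rel_int_in V K = (top_of_set V) interior_of K"

definition convex_body_in :: "vec set \<Rightarrow> vec set \<Rightarrow> bool" where
  "convex_body_in V K \<longleftrightarrow> K \<subseteq> V \<and> convex K \<and> compact K \<and> rel_int_in V K \<noteq> {}"

definition macbeath :: "vec set \<Rightarrow> vec \<Rightarrow> vec set" where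
  "macbeath K x = ((\<lambda>k. k - x) ` K) \<inter> ((\<lambda>k. x - k) ` K)"

definition hilbert_dist :: "vec set \<Rightarrow> vec set \<Rightarrow> vec \<Rightarrow> vec \<Rightarrow> real" where
  "hilbert_dist V K x y =
     (if x = y then 0 else
      (let y' = (SOME p. p \<in> K - rel_int_in V K \<and> (\<exists>t\<ge>0. p = x + t *\<^sub>R (y - x)));
           x' = (SOME p. p \<in> K - rel_int_in V K \<and> (\<exists>t\<ge>0. p = y + t *\<^sub>R (x - y)))
       in ln ((norm (y - x') / norm (x - x')) * (norm (x - y') / norm (y - y'))) / 2))"

definition hilbert_ball :: "vec set \<Rightarrow> vec set \<Rightarrow> vec \<Rightarrow> real \<Rightarrow> vec set" where
  "hilbert_ball V K x r = {y \<in> rel_int_in V K. hilbert_dist V K x y \<le> r}"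

definition mink_gauge :: "vec set \<Rightarrow> vec \<Rightarrow> real" where
  "mink_gauge E v = Inf {l. l > 0 \<and> v \<in> (\<lambda>e. l *\<^sub>R e) ` E}"

definition finsler_ball :: "vec set \<Rightarrow> vec set \<Rightarrow> vec \<Rightarrow> vec set" where
  "finsler_ball V K y =
     {v \<in> V. (mink_gauge ((\<lambda>k. k - y) ` K) v + mink_gauge ((\<lambda>k. k - y) ` K) (- v)) / 2 \<le> 1}"

end

theory Submission
  imports Defs
begin

text \<open>Put R = exp (2 r).  If the Hilbert distance between x and y is at most r, the
  chord of K through x and y extends beyond y by at least |y - x| / (R - 1), and beyond x
  by the same amount.  By convexity the homothety of ratio 1/R sending x to y then maps K
  into K, and so does the one sending y to x: (K - x)/R \<subseteq> K - y and (K - y)/R \<subseteq> K - x.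
  The first inclusion puts A(x)/R inside (K - y) \<inter> (y - K), which lies in the Finsler
  ball.  Conversely both gauges of a vector of the Finsler ball are below 3, so the ball
  lies in 3((K - y) \<inter> (y - K)) and hence, by the second inclusion, in 3R A(x).
  Thus c0 = 3 exp (2 r+) works for every r+ > 0.\<close>

lemma convex_ray_mem:
  fixes x v :: "'a::real_vector"
  assumes K: "convex K" "x \<in> K" "x + t *\<^sub>R v \<in> K" and a: "0 \<le> a" "a \<le> t"
  shows "x + a *\<^sub>R v \<in> K"
proof (cases "t = 0")
  case True
  with K a show ?thesis by simp
next
  case False
  then have "x + a *\<^sub>R v = (1 - a / t) *\<^sub>R x + (a / t) *\<^sub>R (x + t *\<^sub>R v)"
    by (simp add: algebra_simps)
  moreover have "0 \<le> a / t" "a / t \<le> 1"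
    using a False by auto
  ultimately show ?thesis
    using convexD_alt[OF K] by simp
qed

lemma convex_homothety_subset:
  fixes x y :: "'a::real_vector"
  assumes K: "convex K" "x \<in> K" and ext: "x + a *\<^sub>R (y - x) \<in> K" and a: "1 \<le> a"
    and m: "0 \<le> m" "m \<le> 1 - 1 / a"
  shows "(\<lambda>k. y + m *\<^sub>R (k - x)) ` K \<subseteq> K"
proof
  fix z assume "z \<in> (\<lambda>k. y + m *\<^sub>R (k - x)) ` K"
  then obtain k where k: "k \<in> K" and z: "z = y + m *\<^sub>R (k - x)"
    by blast
  define b where "b = 1 - 1 / a"
  have b: "0 \<le> b" "0 \<le> m" "m \<le> b"
    using a m by (auto simp: b_def)
  define l where "l = m / b"
  have l: "0 \<le> l" "l \<le> 1" "b * l = m"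
    using b unfolding l_def by (auto simp: divide_le_eq_1)
  have "x + l *\<^sub>R (k - x) \<in> K"
    using convex_ray_mem[of K x 1 "k - x" l] K k l by simp
  moreover have "b *\<^sub>R (x + l *\<^sub>R (k - x)) + (1 / a) *\<^sub>R (x + a *\<^sub>R (y - x))
      = (b + 1 / a) *\<^sub>R x + (b * l) *\<^sub>R (k - x) + (1 / a * a) *\<^sub>R (y - x)"
    by (simp add: algebra_simps)
  moreover have "\<dots> = z"
    using a l(3) by (simp add: z b_def)
  moreover have "0 \<le> 1 / a" "1 / a \<le> 1" "b = 1 - 1 / a"
    using a by (auto simp: b_def)
  ultimately show "z \<in> K"
    using convexD_alt[OF K(1) _ ext] by (metis add_diff_cancel_left' diff_add_cancel)
qed

lemma rel_int_in_iff:
  "p \<in> rel_int_in V K \<longleftrightarrow> p \<in> V \<and> (\<exists>e>0. ball p e \<inter> V \<subseteq> K)"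
proof
  assume "p \<in> rel_int_in V K"
  then obtain T where T: "openin (top_of_set V) T" "p \<in> T" "T \<subseteq> K"
    unfolding rel_int_in_def interior_of_def by auto
  then obtain U where U: "open U" "T = V \<inter> U"
    using openin_open by metis
  then obtain e where "e > 0" "ball p e \<subseteq> U"
    using T(2) open_contains_ball by blast
  then show "p \<in> V \<and> (\<exists>e>0. ball p e \<inter> V \<subseteq> K)"
    using T U by blast
next
  assume "p \<in> V \<and> (\<exists>e>0. ball p e \<inter> V \<subseteq> K)"
  then obtain e where "p \<in> V" "e > 0" "ball p e \<inter> V \<subseteq> K"
    by blast
  moreover have "openin (top_of_set V) (V \<inter> ball p e)"
    using openin_open by blast
  ultimately show "p \<in> rel_int_in V K"
    unfolding rel_int_in_def interior_of_def by (auto intro!: exI[of _ "V \<inter> ball p e"])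
qed

lemma rel_int_in_subset: "rel_int_in V K \<subseteq> K"
  unfolding rel_int_in_def by (rule interior_of_subset)

lemma rel_int_in_convex_segment:
  assumes V: "subspace V" and K: "K \<subseteq> V" "convex K"
    and x: "x \<in> rel_int_in V K" and z: "z \<in> K" and t: "0 \<le> t" "t < 1"
  shows "x + t *\<^sub>R (z - x) \<in> rel_int_in V K"
proof -
  obtain e where xV: "x \<in> V" and e: "e > 0" "ball x e \<inter> V \<subseteq> K"
    using x rel_int_in_iff by blast
  define p where "p = x + t *\<^sub>R (z - x)"
  have pV: "p \<in> V"
    unfolding p_def using V xV z K by (auto intro: subspace_add subspace_diff subspace_scale)
  have "ball p ((1 - t) * e) \<inter> V \<subseteq> K"
  proof
    fix q assume q: "q \<in> ball p ((1 - t) * e) \<inter> V"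
    \<comment> \<open>q lies on the segment from z to a point w of the e-ball about x.\<close>
    define w where "w = x + (1 / (1 - t)) *\<^sub>R (q - p)"
    have "w \<in> V"
      unfolding w_def using V xV pV q by (auto intro: subspace_add subspace_diff subspace_scale)
    moreover have "dist x w = norm (q - p) / (1 - t)"
      using t by (simp add: w_def dist_norm)
    moreover have "norm (q - p) / (1 - t) < e"
      using q t by (simp add: dist_norm norm_minus_commute field_simps)
    ultimately have "w \<in> K"
      using e by auto
    moreover have "(1 - t) *\<^sub>R w = (1 - t) *\<^sub>R x + (q - p)"
      using t by (simp add: w_def algebra_simps)
    then have "q = (1 - t) *\<^sub>R w + t *\<^sub>R z"
      by (simp add: p_def algebra_simps)
    ultimately show "q \<in> K"
      using convexD[OF K(2) _ z, where u="1 - t" and v=t] t by simp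
  qed
  with pV t e show ?thesis
    unfolding rel_int_in_iff p_def[symmetric] by (metis diff_gt_0_iff_gt mult_pos_pos)
qed

lemma compact_ray_meets_rel_frontier:
  assumes V: "subspace V" and K: "K \<subseteq> V" "compact K" and x: "x \<in> K" and y: "y \<in> K"
    and xy: "x \<noteq> y"
  shows "\<exists>p. p \<in> K - rel_int_in V K \<and> (\<exists>t\<ge>0. p = x + t *\<^sub>R (y - x))"
proof -
  define f where "f t = x + t *\<^sub>R (y - x)" for t :: real
  define T where "T = {0..} \<inter> f -` K"
  have "closed (f -` K)"
    unfolding f_def by (intro closed_vimage compact_imp_closed K continuous_intros)
  then have "closed T"
    unfolding T_def by (intro closed_Int) auto
  obtain B where B: "\<And>k. k \<in> K \<Longrightarrow> norm k \<le> B"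
    using compact_imp_bounded[OF K(2)] bounded_iff by blast
  have "t \<le> (B + norm x) / norm (y - x)" if "t \<in> T" for t
  proof -
    have "t * norm (y - x) = norm (f t - x)"
      using that by (simp add: T_def f_def)
    also have "\<dots> \<le> B + norm x"
      using B[of "f t"] that norm_triangle_ineq4[of "f t" x] by (simp add: T_def)
    finally show ?thesis
      using xy by (simp add: field_simps)
  qed
  then have "bdd_above T"
    by (rule bdd_aboveI)
  moreover have "1 \<in> T"
    using y by (simp add: T_def f_def)
  ultimately have ts: "Sup T \<in> T"
    using closed_contains_Sup \<open>closed T\<close> by blast
  have "f (Sup T) \<notin> rel_int_in V K"
  proof
    assume "f (Sup T) \<in> rel_int_in V K"
    then obtain e where fV: "f (Sup T) \<in> V" and e: "e > 0" "ball (f (Sup T)) e \<inter> V \<subseteq> K"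
      using rel_int_in_iff by blast
    define h where "h = e / (2 * norm (y - x))"
    have h: "h > 0"
      using e xy by (simp add: h_def)
    have "f (Sup T + h) = f (Sup T) + h *\<^sub>R (y - x)"
      by (simp add: f_def algebra_simps)
    moreover have "norm (h *\<^sub>R (y - x)) < e"
      using xy e by (simp add: h_def)
    moreover have "f (Sup T) + h *\<^sub>R (y - x) \<in> V"
      using V fV x y K by (meson in_mono subspace_add subspace_diff subspace_scale)
    ultimately have "f (Sup T + h) \<in> K"
      using e by (auto simp: dist_norm)
    then have "Sup T + h \<in> T"
      using ts h by (simp add: T_def)
    then have "Sup T + h \<le> Sup T"
      using \<open>bdd_above T\<close> by (rule cSup_upper)
    then show False
      using h by simp
  qed
  then show ?thesis
    using ts by (auto simp: T_def f_def)
qed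

definition ray_exit :: "vec set \<Rightarrow> vec set \<Rightarrow> vec \<Rightarrow> vec \<Rightarrow> vec" where
  "ray_exit V K x y = (SOME p. p \<in> K - rel_int_in V K \<and> (\<exists>t\<ge>0. p = x + t *\<^sub>R (y - x)))"

lemma ray_exit_beyond:
  assumes V: "subspace V" and K: "K \<subseteq> V" "convex K" "compact K"
    and x: "x \<in> rel_int_in V K" and y: "y \<in> rel_int_in V K" and xy: "x \<noteq> y"
  obtains t where "1 < t" "ray_exit V K x y = x + t *\<^sub>R (y - x)" "ray_exit V K x y \<in> K"
proof -
  have "\<exists>p. p \<in> K - rel_int_in V K \<and> (\<exists>t\<ge>0. p = x + t *\<^sub>R (y - x))"
    using compact_ray_meets_rel_frontier[OF V K(1,3) _ _ xy] x y rel_int_in_subset by blast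
  from someI_ex[OF this] obtain t where p: "ray_exit V K x y \<in> K"
    "ray_exit V K x y \<notin> rel_int_in V K" "0 \<le> t" "ray_exit V K x y = x + t *\<^sub>R (y - x)"
    unfolding ray_exit_def by blast
  have "x + t *\<^sub>R (y - x) \<in> rel_int_in V K" if "t \<le> 1"
  proof (cases "t = 1")
    case True
    with y show ?thesis by simp
  next
    case False
    with that \<open>0 \<le> t\<close> show ?thesis
      using rel_int_in_convex_segment[OF V K(1,2) x] y rel_int_in_subset by force
  qed
  with p have "1 < t"
    by (metis linorder_not_le)
  with p show thesis
    using that by blast
qed

lemma hilbert_dist_ray_exit:
  "x \<noteq> y \<Longrightarrow> hilbert_dist V K x y =
     ln ((norm (y - ray_exit V K y x) / norm (x - ray_exit V K y x)) *
         (norm (x - ray_exit V K x y) / norm (y - ray_exit V K x y))) / 2"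
  unfolding hilbert_dist_def ray_exit_def Let_def by simp

lemma hilbert_dist_commute: "hilbert_dist V K x y = hilbert_dist V K y x"
  by (cases "x = y") (simp_all add: hilbert_dist_ray_exit mult.commute)

lemma hilbert_dist_ray_params:
  assumes xy: "x \<noteq> y"
    and t: "ray_exit V K x y = x + t *\<^sub>R (y - x)" "1 < t"
    and s: "ray_exit V K y x = y + s *\<^sub>R (x - y)" "1 < s"
  shows "hilbert_dist V K x y = ln ((s / (s - 1)) * (t / (t - 1))) / 2"
proof -
  define n where "n = norm (x - y)"
  have "n > 0"
    using xy by (simp add: n_def)
  have "y - ray_exit V K y x = (- s) *\<^sub>R (x - y)" "x - ray_exit V K y x = (1 - s) *\<^sub>R (x - y)"
       "x - ray_exit V K x y = t *\<^sub>R (x - y)" "y - ray_exit V K x y = (t - 1) *\<^sub>R (x - y)"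
    using s t by (simp_all add: algebra_simps)
  then have "norm (y - ray_exit V K y x) = s * n" "norm (x - ray_exit V K y x) = (s - 1) * n"
            "norm (x - ray_exit V K x y) = t * n" "norm (y - ray_exit V K x y) = (t - 1) * n"
    using s t by (simp_all add: n_def)
  with \<open>n > 0\<close> show ?thesis
    by (simp add: hilbert_dist_ray_exit[OF xy])
qed

lemma hilbert_dist_le_imp_chord_extension:
  assumes V: "subspace V" and K: "K \<subseteq> V" "convex K" "compact K"
    and x: "x \<in> rel_int_in V K" and y: "y \<in> rel_int_in V K" and d: "hilbert_dist V K x y \<le> r"
  shows "x + (exp (2 * r) / (exp (2 * r) - 1)) *\<^sub>R (y - x) \<in> K"
proof (cases "x = y")
  case True
  with x rel_int_in_subset show ?thesis by auto
next
  case False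
  obtain t where t: "1 < t" "ray_exit V K x y = x + t *\<^sub>R (y - x)" "ray_exit V K x y \<in> K"
    using ray_exit_beyond[OF V K x y False] by blast
  obtain s where s: "1 < s" "ray_exit V K y x = y + s *\<^sub>R (x - y)"
    using ray_exit_beyond[OF V K y x] False by metis
  define R where "R = exp (2 * r)"
  have "ln ((s / (s - 1)) * (t / (t - 1))) \<le> 2 * r"
    using d hilbert_dist_ray_params[OF False t(2,1) s(2,1)] by simp
  moreover have "0 < (s / (s - 1)) * (t / (t - 1))"
    using s t by simp
  ultimately have "(s / (s - 1)) * (t / (t - 1)) \<le> R"
    unfolding R_def by (metis exp_le_cancel_iff exp_ln)
  moreover have "1 \<le> s / (s - 1)" "0 < t / (t - 1)"
    using s t by simp_all
  ultimately have "t / (t - 1) \<le> R"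
    by (smt (verit) mult_le_cancel_right1)
  moreover have "1 < t / (t - 1)"
    using t by simp
  ultimately have "1 < R"
    by linarith
  with \<open>t / (t - 1) \<le> R\<close> have "R / (R - 1) \<le> t"
    using t by (simp add: field_simps)
  moreover have "0 \<le> R / (R - 1)"
    using \<open>1 < R\<close> by simp
  moreover have "x \<in> K"
    using x rel_int_in_subset by blast
  ultimately show ?thesis
    using convex_ray_mem[OF K(2) _ t(3)[unfolded t(2)]] by (simp add: R_def)
qed

lemma hilbert_dist_le_imp_homothety_subset:
  assumes V: "subspace V" and K: "K \<subseteq> V" "convex K" "compact K"
    and x: "x \<in> rel_int_in V K" and y: "y \<in> rel_int_in V K" and d: "hilbert_dist V K x y \<le> r"
    and r: "0 < r" and m: "0 \<le> m" "m \<le> 1 / exp (2 * r)"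
  shows "(\<lambda>k. y + m *\<^sub>R (k - x)) ` K \<subseteq> K"
proof -
  define R where "R = exp (2 * r)"
  have "1 < R"
    using r by (simp add: R_def)
  then have "1 \<le> R / (R - 1)" "m \<le> 1 - 1 / (R / (R - 1))"
    using m by (simp_all add: R_def field_simps)
  moreover have "x \<in> K"
    using x rel_int_in_subset by blast
  moreover note hilbert_dist_le_imp_chord_extension[OF V K x y d, folded R_def]
  ultimately show ?thesis
    using convex_homothety_subset[OF K(2)] m(1) by blast
qed

lemma mink_gauge_le_1: "v \<in> E \<Longrightarrow> mink_gauge E v \<le> 1"
  unfolding mink_gauge_def
  by (rule cInf_lower) (auto intro: bdd_belowI[of _ 0] simp: image_iff)

lemma mink_gauge_nonneg:
  "\<exists>l>0. v \<in> (\<lambda>e. l *\<^sub>R e) ` E \<Longrightarrow> 0 \<le> mink_gauge E v"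
  unfolding mink_gauge_def by (rule cInf_greatest) auto

lemma mink_gauge_less_imp_mem:
  assumes E: "convex E" "0 \<in> E" and v: "\<exists>l>0. v \<in> (\<lambda>e. l *\<^sub>R e) ` E"
    and c: "mink_gauge E v < c"
  shows "(1 / c) *\<^sub>R v \<in> E"
proof -
  obtain l where "l > 0" "v \<in> (\<lambda>e. l *\<^sub>R e) ` E" "l < c"
    using cInf_lessD[of "{l. l > 0 \<and> v \<in> (\<lambda>e. l *\<^sub>R e) ` E}" c] v c
    unfolding mink_gauge_def by auto
  then obtain e where "e \<in> E" "(1 / c) *\<^sub>R v = 0 + (l / c) *\<^sub>R e" "0 \<le> l / c" "l / c \<le> 1"
    by auto
  then show ?thesis
    using convex_ray_mem[of E 0 1 e "l / c"] E by simp
qed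

lemma rel_int_in_absorbing:
  assumes V: "subspace V" and y: "y \<in> rel_int_in V K" and u: "u \<in> V"
  shows "\<exists>l>0. u \<in> (\<lambda>e. l *\<^sub>R e) ` ((\<lambda>k. k - y) ` K)"
proof -
  obtain e where yV: "y \<in> V" and e: "e > 0" "ball y e \<inter> V \<subseteq> K"
    using y rel_int_in_iff by blast
  define h where "h = e / (norm u + 1)"
  have n: "0 < norm u + 1"
    by (simp add: add_nonneg_pos)
  have h: "h > 0"
    using e n by (simp add: h_def)
  have "norm (h *\<^sub>R u) < e"
    using e n by (simp add: h_def field_simps)
  moreover have "y + h *\<^sub>R u \<in> V"
    using V yV u by (simp add: subspace_add subspace_scale)
  ultimately have "y + h *\<^sub>R u \<in> K"
    using e by (auto simp: dist_norm)
  then have "h *\<^sub>R u \<in> (\<lambda>k. k - y) ` K"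
    by (auto intro: image_eqI[where x="y + h *\<^sub>R u"])
  moreover have "u = (1 / h) *\<^sub>R (h *\<^sub>R u)"
    using h by simp
  ultimately have "u \<in> (\<lambda>e. (1 / h) *\<^sub>R e) ` ((\<lambda>k. k - y) ` K)"
    by (rule rev_image_eqI)
  with h show ?thesis
    by (metis zero_less_divide_1_iff)
qed

lemma finsler_ballI:
  assumes "v \<in> V" "v \<in> (\<lambda>k. k - y) ` K" "- v \<in> (\<lambda>k. k - y) ` K"
  shows "v \<in> finsler_ball V K y"
  using mink_gauge_le_1[OF assms(2)] mink_gauge_le_1[OF assms(3)] assms(1)
  unfolding finsler_ball_def by simp

lemma finsler_ball_uminus:
  assumes V: "subspace V" and v: "v \<in> finsler_ball V K y"
  shows "- v \<in> finsler_ball V K y"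
  using v subspace_neg[OF V] unfolding finsler_ball_def by (simp add: add.commute)

lemma finsler_ball_third_mem:
  assumes V: "subspace V" and K: "convex K" and y: "y \<in> rel_int_in V K"
    and v: "v \<in> finsler_ball V K y"
  shows "y + (1 / 3) *\<^sub>R v \<in> K"
proof -
  define E where "E = (\<lambda>k. k - y) ` K"
  have vV: "v \<in> V" and sum: "mink_gauge E v + mink_gauge E (- v) \<le> 2"
    using v unfolding finsler_ball_def E_def by auto
  have "0 \<le> mink_gauge E (- v)"
    using mink_gauge_nonneg[OF rel_int_in_absorbing[OF V y subspace_neg[OF V vV]]]
    unfolding E_def .
  with sum have "mink_gauge E v < 3"
    by linarith
  moreover have "convex E"
    unfolding E_def using convex_translation[OF K, of "- y"] by simp
  moreover have "0 \<in> E"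
    using y rel_int_in_subset unfolding E_def by force
  ultimately have "(1 / 3) *\<^sub>R v \<in> E"
    using mink_gauge_less_imp_mem rel_int_in_absorbing[OF V y vV, folded E_def] by blast
  then show ?thesis
    unfolding E_def by auto
qed

lemma scaled_macbeath_subset_finsler_ball:
  assumes V: "subspace V" and K: "K \<subseteq> V" and x: "x \<in> K"
    and hom: "(\<lambda>k. y + c *\<^sub>R (k - x)) ` K \<subseteq> K"
  shows "(\<lambda>v. c *\<^sub>R v) ` macbeath K x \<subseteq> finsler_ball V K y"
proof
  fix z assume "z \<in> (\<lambda>v. c *\<^sub>R v) ` macbeath K x"
  then obtain k1 k2 where k: "k1 \<in> K" "k2 \<in> K" "k1 - x = x - k2" and z: "z = c *\<^sub>R (k1 - x)"
    unfolding macbeath_def by auto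
  have "y + z \<in> K"
    using hom k(1) z by blast
  moreover have "- z = c *\<^sub>R (k2 - x)"
    unfolding z k(3) by (metis minus_diff_eq scaleR_minus_right)
  then have "y + - z \<in> K"
    using hom k(2) by auto
  moreover have "z \<in> V"
    using V K k(1) x z by (auto intro: subspace_diff subspace_scale)
  ultimately show "z \<in> finsler_ball V K y"
    using rev_image_eqI[of "y + z" K z "\<lambda>k. k - y"] rev_image_eqI[of "y + - z" K "- z" "\<lambda>k. k - y"]
    by (intro finsler_ballI) auto
qed

lemma finsler_ball_subset_scaled_macbeath:
  assumes V: "subspace V" and K: "convex K" and y: "y \<in> rel_int_in V K" and c: "c \<noteq> 0"
    and hom: "(\<lambda>k. x + c *\<^sub>R (k - y)) ` K \<subseteq> K"
  shows "finsler_ball V K y \<subseteq> (\<lambda>v. (3 / c) *\<^sub>R v) ` macbeath K x"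
proof
  fix v assume v: "v \<in> finsler_ball V K y"
  define u where "u = (c / 3) *\<^sub>R v"
  have "x + c *\<^sub>R ((y + (1 / 3) *\<^sub>R v) - y) \<in> K"
    using hom finsler_ball_third_mem[OF V K y v] by blast
  then have "x + u \<in> K"
    by (simp add: u_def)
  have "x + c *\<^sub>R ((y + (1 / 3) *\<^sub>R - v) - y) \<in> K"
    using hom finsler_ball_third_mem[OF V K y finsler_ball_uminus[OF V v]] by blast
  then have "x - u \<in> K"
    by (simp add: u_def)
  with \<open>x + u \<in> K\<close> have "u \<in> macbeath K x"
    using rev_image_eqI[of "x + u" K u "\<lambda>k. k - x"] rev_image_eqI[of "x - u" K u "\<lambda>k. x - k"]
    unfolding macbeath_def by auto
  moreover have "v = (3 / c) *\<^sub>R u"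
    using c by (simp add: u_def)
  ultimately show "v \<in> (\<lambda>v. (3 / c) *\<^sub>R v) ` macbeath K x"
    by blast
qed

lemma subspace_Rd: "subspace (Rd d)"
  unfolding subspace_def Rd_def by auto

theorem lemma3p3:
  fixes rplus :: real
  assumes "rplus \<ge> 8"
  shows "\<exists>c0 > 1. \<forall>(d::nat) (K::vec set) (x::vec) (y::vec).
           convex_body_in (Rd d) K \<longrightarrow> x \<in> rel_int_in (Rd d) K \<longrightarrow>
           y \<in> hilbert_ball (Rd d) K x rplus \<longrightarrow>
           (\<lambda>v. (1 / c0) *\<^sub>R v) ` macbeath K x \<subseteq> finsler_ball (Rd d) K y \<and>
           finsler_ball (Rd d) K y \<subseteq> (\<lambda>v. c0 *\<^sub>R v) ` macbeath K x"
proof (intro exI[of _ "3 * exp (2 * rplus)"] conjI allI impI)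
  define R where "R = exp (2 * rplus)"
  have r: "0 < rplus"
    using assms by simp
  then have "1 < R"
    by (simp add: R_def)
  then show "1 < 3 * exp (2 * rplus)"
    unfolding R_def by linarith
  fix d K x y
  assume "convex_body_in (Rd d) K" and x: "x \<in> rel_int_in (Rd d) K"
    and "y \<in> hilbert_ball (Rd d) K x rplus"
  then have K: "K \<subseteq> Rd d" "convex K" "compact K" and y: "y \<in> rel_int_in (Rd d) K"
    and d: "hilbert_dist (Rd d) K x y \<le> rplus"
    unfolding convex_body_in_def hilbert_ball_def by auto
  note hom = hilbert_dist_le_imp_homothety_subset[OF subspace_Rd K _ _ _ r, folded R_def]
  have "(\<lambda>k. y + (1 / (3 * R)) *\<^sub>R (k - x)) ` K \<subseteq> K"
    using hom[OF x y d] \<open>1 < R\<close> by (simp add: field_simps)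
  from scaled_macbeath_subset_finsler_ball[OF subspace_Rd K(1) _ this] x rel_int_in_subset
  show "(\<lambda>v. (1 / (3 * exp (2 * rplus))) *\<^sub>R v) ` macbeath K x \<subseteq> finsler_ball (Rd d) K y"
    unfolding R_def by blast
  have "(\<lambda>k. x + (1 / R) *\<^sub>R (k - y)) ` K \<subseteq> K"
    using hom[OF y x] d \<open>1 < R\<close> by (simp add: hilbert_dist_commute)
  from finsler_ball_subset_scaled_macbeath[OF subspace_Rd K(2) y _ this] \<open>1 < R\<close>
  show "finsler_ball (Rd d) K y \<subseteq> (\<lambda>v. (3 * exp (2 * rplus)) *\<^sub>R v) ` macbeath K x"
    by (simp add: R_def)
qed

end
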